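(* Let $-\infty\le a<b\le\infty$, let $\kappa,\varphi:(a,b)\to\mathbb C$ be measurable with $\kappa\in L^2(a,b)$ and $\mathbb 1_{(a,c)}\varphi\in L^2(a,b)$ for every $c\in(a,b)$, and let $T$ be the integral operator in $L^2(a,b)$, $(Tf)(t)=\varphi(t)\int_t^b f(s)\overline{\kappa(s)}\,ds$, on its maximal domain. Choose $c_0:=a<c_1<c_2<\dots<b$ with $\|\mathbb 1_{(c_n,b)}\kappa\|^2=2^{-n}\|\kappa\|^2$, and set $J_n=(c_{n-1},c_n)$, $\omega_n=\|\mathbb 1_{J_n}\kappa\|\cdot\|\mathbb 1_{J_n}\varphi\|$. Then: $T$ bounded $\Rightarrow$ $\operatorname{Re}T$ bounded $\Rightarrow$ $\sup_{n\in\mathbb N}\omega_n<\infty$ $\Rightarrow$ $T$ bounded. In particular these three statements are equivalent.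
   Context: Norms are $L^2(a,b)$-norms; $\mathbb 1_E$ is the indicator function of $E$; $T$ is a closed, possibly unbounded operator. *)

theory Defs
  imports "HOL-Analysis.Analysis"
begin

definition Ioo_e :: "ereal \<Rightarrow> ereal \<Rightarrow> real set" where
  "Ioo_e a b = {x. a < ereal x \<and> ereal x < b}"

definition L2 :: "ereal \<Rightarrow> ereal \<Rightarrow> (real \<Rightarrow> complex) \<Rightarrow> bool" where
  "L2 a b f \<longleftrightarrow> f \<in> borel_measurable (lebesgue_on (Ioo_e a b)) \<and>
     integrable (lebesgue_on (Ioo_e a b)) (\<lambda>x. (cmod (f x))\<^sup>2)"

definition L2norm :: "ereal \<Rightarrow> ereal \<Rightarrow> (real \<Rightarrow> complex) \<Rightarrow> real" where
  "L2norm a b f = sqrt (integral\<^sup>L (lebesgue_on (Ioo_e a b)) (\<lambda>x. (cmod (f x))\<^sup>2))"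

definition L2inner :: "ereal \<Rightarrow> ereal \<Rightarrow> (real \<Rightarrow> complex) \<Rightarrow> (real \<Rightarrow> complex) \<Rightarrow> complex" where
  "L2inner a b f g = integral\<^sup>L (lebesgue_on (Ioo_e a b)) (\<lambda>x. f x * cnj (g x))"

definition intop :: "ereal \<Rightarrow> (real \<Rightarrow> complex) \<Rightarrow> (real \<Rightarrow> complex) \<Rightarrow> (real \<Rightarrow> complex) \<Rightarrow> (real \<Rightarrow> complex)" where
  "intop b \<phi> \<kappa> f = (\<lambda>t. \<phi> t * integral\<^sup>L (lebesgue_on (Ioo_e (ereal t) b)) (\<lambda>s. f s * cnj (\<kappa> s)))"

definition intop_dom :: "ereal \<Rightarrow> ereal \<Rightarrow> (real \<Rightarrow> complex) \<Rightarrow> (real \<Rightarrow> complex) \<Rightarrow> (real \<Rightarrow> complex) set" where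
  "intop_dom a b \<phi> \<kappa> = {f. L2 a b f \<and> L2 a b (intop b \<phi> \<kappa> f)}"

definition op_bounded :: "ereal \<Rightarrow> ereal \<Rightarrow> (real \<Rightarrow> complex) set \<Rightarrow> ((real \<Rightarrow> complex) \<Rightarrow> (real \<Rightarrow> complex)) \<Rightarrow> bool" where
  "op_bounded a b D A \<longleftrightarrow> (\<exists>C. \<forall>f\<in>D. L2norm a b (A f) \<le> C * L2norm a b f)"

text \<open>g is in the domain of the adjoint A* with A* g = h.\<close>
definition adjoint_pair :: "ereal \<Rightarrow> ereal \<Rightarrow> (real \<Rightarrow> complex) set \<Rightarrow> ((real \<Rightarrow> complex) \<Rightarrow> (real \<Rightarrow> complex)) \<Rightarrow> (real \<Rightarrow> complex) \<Rightarrow> (real \<Rightarrow> complex) \<Rightarrow> bool" where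
  "adjoint_pair a b D A g h \<longleftrightarrow> L2 a b g \<and> L2 a b h \<and>
     (\<forall>f\<in>D. L2inner a b (A f) g = L2inner a b f h)"

text \<open>Re A = (A + A*)/2 on D(A) \<inter> D(A*) is bounded.\<close>
definition re_op_bounded :: "ereal \<Rightarrow> ereal \<Rightarrow> (real \<Rightarrow> complex) set \<Rightarrow> ((real \<Rightarrow> complex) \<Rightarrow> (real \<Rightarrow> complex)) \<Rightarrow> bool" where
  "re_op_bounded a b D A \<longleftrightarrow> (\<exists>C. \<forall>f h. f \<in> D \<and> adjoint_pair a b D A f h \<longrightarrow>
       L2norm a b (\<lambda>x. (A f x + h x) / 2) \<le> C * L2norm a b f)"

end

theory Submission
  imports Defs
begin

text \<open>
  Truncations \<open>\<one>\<^bsub>(a,r)\<^esub> h\<close> of square integrable functions lie in the domain of \<open>T\<close>, and for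
  functions \<open>f\<close> vanishing near \<open>b\<close> the formal adjoint \<open>(T\<^sup>* f)(s) = \<kappa>(s) \<integral>\<^sub>a\<^sup>s f \<phi>\<^sup>*\<close> is the
  Hilbert space adjoint (Fubini on the triangle \<open>t < s\<close>). If \<open>T\<close> is bounded by \<open>C\<close> and
  \<open>T\<^sup>* f = h\<close>, testing with the truncations \<open>g\<close> of \<open>h\<close> gives \<open>\<parallel>g\<parallel>\<^sup>2 \<le> C \<parallel>g\<parallel> \<parallel>f\<parallel>\<close>, so \<open>T\<^sup>*\<close>
  and hence \<open>Re T\<close> are bounded by \<open>C\<close>.

  If \<open>Re T\<close> is bounded by \<open>C\<close>, test it on \<open>f = \<one>\<^bsub>J\<^sub>n\<^sub>+\<^sub>1\<^esub> \<kappa>\<close> against \<open>g = \<one>\<^bsub>J\<^sub>n\<^esub> \<phi>\<close>. Since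
  \<open>J\<^sub>n\<close> lies left of \<open>J\<^sub>n\<^sub>+\<^sub>1\<close>, \<open>T f = \<parallel>f\<parallel>\<^sup>2 \<phi>\<close> on \<open>J\<^sub>n\<close> while \<open>T g = 0\<close> on \<open>J\<^sub>n\<^sub>+\<^sub>1\<close>, whence
  \<open>\<parallel>f\<parallel>\<^sup>2 \<parallel>g\<parallel>\<^sup>2 / 2 \<le> C \<parallel>f\<parallel> \<parallel>g\<parallel>\<close>; as \<open>\<parallel>\<one>\<^bsub>J\<^sub>n\<^esub> \<kappa>\<parallel> = \<surd>2 \<parallel>f\<parallel>\<close>, this bounds \<open>\<omega>\<^sub>n\<close>.

  If \<open>\<omega>\<^sub>n \<le> M\<close>, Cauchy-Schwarz on each piece gives
  \<open>|T f| \<le> |\<phi>| \<Sum>\<^sub>m\<^sub>\<ge>\<^sub>n \<parallel>\<one>\<^bsub>J\<^sub>m\<^esub> f\<parallel> \<parallel>\<one>\<^bsub>J\<^sub>m\<^esub> \<kappa>\<parallel>\<close> on \<open>J\<^sub>n\<close>. The norms \<open>\<parallel>\<one>\<^bsub>J\<^sub>m\<^esub> \<kappa>\<parallel>\<close> decay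
  geometrically with ratio \<open>\<rho> = 2\<^sup>-\<^sup>1\<^sup>/\<^sup>2\<close>, so \<open>\<parallel>\<one>\<^bsub>J\<^sub>n\<^esub> T f\<parallel> \<le> M\<close> times the convolution of
  \<open>(\<parallel>\<one>\<^bsub>J\<^sub>m\<^esub> f\<parallel>)\<^sub>m\<close> with the kernel \<open>\<rho>\<^sup>j\<close>, and Young's inequality yields
  \<open>\<parallel>T f\<parallel> \<le> M \<parallel>f\<parallel> / (1 - \<rho>)\<close>. Here \<open>T f\<close> vanishes outside the pieces because \<open>\<kappa>\<close> does.
\<close>

section \<open>Lebesgue measure on the real line\<close>

lemma sets_lebesgue_Ioo_e [measurable]: "Ioo_e x y \<in> sets lebesgue"
proof -
  have "Ioo_e x y \<in> sets lborel"
    unfolding Ioo_e_def by measurable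
  then show ?thesis
    by (rule sets_completionI_sets)
qed

lemma borel_measurable_cnj [measurable (raw)]:
  "f \<in> borel_measurable M \<Longrightarrow> (\<lambda>x. cnj (f x :: complex)) \<in> borel_measurable M"
  by (rule borel_measurable_continuous_on[of cnj]) (auto intro: continuous_intros)

lemma borel_measurable_ident_lebesgue_on [measurable]:
  "(\<lambda>x::real. x) \<in> borel_measurable (lebesgue_on S)"
  by (intro measurable_restrict_space1 measurable_completion) simp

lemma borel_measurable_indicator_lebesgue_on [measurable]:
  "A \<in> sets lebesgue \<Longrightarrow> (\<lambda>x::real. indicator A x :: 'a::{zero_neq_one, topological_space})
     \<in> borel_measurable (lebesgue_on S)"
  by (intro measurable_restrict_space1) simp

lemma sigma_finite_lebesgue_on:
  assumes "S \<in> sets lebesgue"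
  shows "sigma_finite_measure (lebesgue_on (S :: real set))"
proof -
  have "(\<Union>n::nat. {-real n..real n}) = UNIV"
  proof (intro set_eqI iffI)
    fix x :: real
    obtain n :: nat where "\<bar>x\<bar> \<le> real n"
      using real_arch_simple by blast
    then show "x \<in> (\<Union>n::nat. {-real n..real n})"
      by (auto simp: abs_le_iff intro!: exI[of _ n])
  qed simp
  then have "sigma_finite_measure (lebesgue :: real measure)"
    unfolding sigma_finite_measure_def
    by (intro exI[of _ "range (\<lambda>n::nat. {-real n..real n})"]) auto
  then show ?thesis
    using assms by (rule sigma_finite_measure_restrict_space)
qed

lemma AE_lebesgue_on_neq:
  assumes "S \<in> sets lebesgue"
  shows "AE x in lebesgue_on S. x \<noteq> (t :: real)"
  using assms AE_completion[OF AE_lborel_singleton[of t]]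
  by (subst AE_restrict_space_iff) (auto elim: eventually_mono)

lemma integral_mult_integral_greaterThan_swap:
  fixes U V :: "real \<Rightarrow> complex"
  assumes S: "S \<in> sets lebesgue"
    and U: "integrable (lebesgue_on S) U" and V: "integrable (lebesgue_on S) V"
  shows "(\<integral>t. U t * (\<integral>s. indicator {t<..} s *\<^sub>R V s \<partial>lebesgue_on S) \<partial>lebesgue_on S) =
         (\<integral>s. V s * (\<integral>t. indicator {..<s} t *\<^sub>R U t \<partial>lebesgue_on S) \<partial>lebesgue_on S)"
proof -
  let ?M = "lebesgue_on S"
  interpret pair_sigma_finite ?M ?M
    unfolding pair_sigma_finite_def using sigma_finite_lebesgue_on[OF S] by simp
  have [measurable]: "U \<in> borel_measurable ?M" "V \<in> borel_measurable ?M"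
    using U V by auto
  define F where "F t s = (if t < s then U t * V s else 0)" for t s
  have F_meas: "(\<lambda>(t, s). F t s) \<in> borel_measurable (?M \<Otimes>\<^sub>M ?M)"
    unfolding F_def by measurable
  have "integrable (?M \<Otimes>\<^sub>M ?M) (\<lambda>(t, s). U t * V s)"
  proof (rule Fubini_integrable)
    have "integrable ?M (\<lambda>t. norm (U t) * (\<integral>s. norm (V s) \<partial>?M))"
      using U by (intro integrable_mult_left) auto
    then show "integrable ?M (\<lambda>t. \<integral>s. norm ((\<lambda>(t, s). U t * V s) (t, s)) \<partial>?M)"
      by (simp add: norm_mult)
  qed (use V in auto)
  then have F_int: "integrable (?M \<Otimes>\<^sub>M ?M) (\<lambda>(t, s). F t s)"
    by (rule Bochner_Integration.integrable_bound[OF _ F_meas]) (auto simp: F_def norm_mult)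
  have F_row: "(\<integral>s. F t s \<partial>?M) = U t * (\<integral>s. indicator {t<..} s *\<^sub>R V s \<partial>?M)" for t
  proof -
    have "(\<lambda>s. F t s) = (\<lambda>s. U t * (indicator {t<..} s *\<^sub>R V s))"
      by (auto simp: F_def indicator_def fun_eq_iff)
    then show ?thesis
      by (simp only: integral_mult_right_zero)
  qed
  have F_column: "(\<integral>t. F t s \<partial>?M) = V s * (\<integral>t. indicator {..<s} t *\<^sub>R U t \<partial>?M)" for s
  proof -
    have "(\<lambda>t. F t s) = (\<lambda>t. V s * (indicator {..<s} t *\<^sub>R U t))"
      by (auto simp: F_def indicator_def fun_eq_iff)
    then show ?thesis
      by (simp only: integral_mult_right_zero)
  qed
  have "(\<integral>t. (\<integral>s. F t s \<partial>?M) \<partial>?M) = (\<integral>s. (\<integral>t. F t s \<partial>?M) \<partial>?M)"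
    by (rule Fubini_integral[OF F_int, symmetric])
  then show ?thesis
    by (simp only: F_row F_column)
qed

section \<open>Series of nonnegative extended reals\<close>

lemma power2_le_imp_le_ennreal:
  fixes x y :: ennreal
  assumes "x^2 \<le> y^2"
  shows "x \<le> y"
proof (cases x rule: ennreal_cases)
  case (real r)
  show ?thesis
  proof (cases y rule: ennreal_cases)
    case (real s)
    with \<open>x = ennreal r\<close> assms \<open>0 \<le> r\<close> have "ennreal (r^2) \<le> ennreal (s^2)"
      by (simp add: ennreal_power)
    then have "r^2 \<le> s^2" using \<open>0 \<le> s\<close> by (simp add: ennreal_le_iff)
    then have "r \<le> s" using \<open>0 \<le> s\<close> by (rule power2_le_imp_le)
    then show ?thesis using \<open>x = ennreal r\<close> \<open>y = ennreal s\<close> by (simp add: ennreal_leI)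
  qed simp
next
  case top
  then have "y^2 = top" using assms by (simp add: top_unique)
  then show ?thesis using top
    by (metis ennreal_mult_eq_top_iff power2_eq_square top_greatest)
qed

lemma Cauchy_Schwarz_suminf_ennreal:
  fixes x y :: "nat \<Rightarrow> real"
  assumes "\<And>m. 0 \<le> x m" "\<And>m. 0 \<le> y m"
  shows "(\<Sum>m. ennreal (x m * y m))^2 \<le> (\<Sum>m. ennreal ((x m)^2)) * (\<Sum>m. ennreal ((y m)^2))"
proof -
  have "(\<integral>\<^sup>+m. ennreal (x m) * ennreal (y m) \<partial>count_space UNIV)^2 \<le>
      (\<integral>\<^sup>+m. ennreal (x m)^2 \<partial>count_space UNIV) * (\<integral>\<^sup>+m. ennreal (y m)^2 \<partial>count_space UNIV)"
    by (rule Cauchy_Schwarz_nn_integral) simp_all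
  then show ?thesis
    using assms by (simp add: nn_integral_count_space_nat ennreal_mult ennreal_power)
qed

lemma suminf_ennreal_commute:
  fixes f :: "nat \<Rightarrow> nat \<Rightarrow> ennreal"
  shows "(\<Sum>n. \<Sum>m. f n m) = (\<Sum>m. \<Sum>n. f n m)"
proof -
  have "(\<Sum>n. \<Sum>m. f n m) = (\<Sum>n. \<integral>\<^sup>+m. f n m \<partial>count_space UNIV)"
    by (simp add: nn_integral_count_space_nat)
  also have "\<dots> = (\<integral>\<^sup>+m. (\<Sum>n. f n m) \<partial>count_space UNIV)"
    by (rule nn_integral_suminf[symmetric]) simp
  also have "\<dots> = (\<Sum>m. \<Sum>n. f n m)"
    by (simp add: nn_integral_count_space_nat)
  finally show ?thesis .
qed

lemma suminf_ennreal_geometric_from: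
  fixes q :: real
  assumes "0 \<le> q" "q < 1"
  shows "(\<Sum>m. ennreal (if n \<le> m then q^(m - n) else 0)) = ennreal (1 / (1 - q))"
proof (rule suminf_ennreal_eq)
  have "(\<lambda>i. if n \<le> i + n then q^(i + n - n) else 0) sums (1 / (1 - q))"
    using geometric_sums[of q] assms by simp
  then show "(\<lambda>m. if n \<le> m then q^(m - n) else 0) sums (1 / (1 - q))"
    by (subst (asm) sums_iff_shift) simp
qed (use assms in auto)

lemma sum_geometric_le:
  fixes q :: real
  assumes "0 \<le> q" "q < 1"
  shows "(\<Sum>i<N. q^i) \<le> 1 / (1 - q)"
proof -
  have "(\<Sum>i<N. q^i) = (1 - q^N) / (1 - q)"
    using assms by (simp add: sum_gp_strict)
  also have "\<dots> \<le> 1 / (1 - q)"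
    using assms by (intro divide_right_mono) simp_all
  finally show ?thesis .
qed

lemma square_suminf_geometric_convolution_le:
  fixes x :: "nat \<Rightarrow> real" and q :: real
  assumes x: "\<And>m. 0 \<le> x m" and q: "0 \<le> q" "q < 1"
  shows "(\<Sum>m. ennreal (if n \<le> m then x m * q^(m - n) else 0))^2
      \<le> ennreal (1 / (1 - q)) * (\<Sum>m. ennreal (if n \<le> m then (x m)^2 * q^(m - n) else 0))"
proof -
  define u where "u m = (if n \<le> m then x m * sqrt q ^ (m - n) else 0)" for m
  define v where "v m = (if n \<le> m then sqrt q ^ (m - n) else 0)" for m
  have "u m * v m = (if n \<le> m then x m * q^(m - n) else 0)" for m
    using q by (simp add: u_def v_def power_mult_distrib[symmetric] real_sqrt_power[symmetric])
  moreover have "(u m)^2 = (if n \<le> m then (x m)^2 * q^(m - n) else 0)" for m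
    using q by (simp add: u_def power_mult_distrib real_sqrt_power[symmetric] power2_eq_square)
  moreover have "(v m)^2 = (if n \<le> m then q^(m - n) else 0)" for m
    using q by (simp add: v_def real_sqrt_power[symmetric] power2_eq_square)
  moreover have "0 \<le> u m" "0 \<le> v m" for m
    using x q by (simp_all add: u_def v_def)
  ultimately show ?thesis
    using Cauchy_Schwarz_suminf_ennreal[of u v] suminf_ennreal_geometric_from[OF q, of n]
    by (simp add: mult.commute)
qed

lemma suminf_geometric_weights_le:
  fixes q y :: real
  assumes q: "0 \<le> q" "q < 1" and y: "0 \<le> y"
  shows "(\<Sum>n. ennreal (if n \<le> m then y * q^(m - n) else 0)) \<le> ennreal (1 / (1 - q)) * ennreal y"
proof -
  have "(\<Sum>n<Suc m. q^(m - n)) = (\<Sum>i<Suc m. q^i)"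
    using sum.nat_diff_reindex[of "\<lambda>i. q^i" "Suc m"] by simp
  also have "\<dots> \<le> 1 / (1 - q)"
    by (rule sum_geometric_le[OF q])
  finally have le: "y * (\<Sum>n<Suc m. q^(m - n)) \<le> y * (1 / (1 - q))"
    using y by (rule mult_left_mono)
  have "(\<Sum>n. ennreal (if n \<le> m then y * q^(m - n) else 0)) =
      (\<Sum>n<Suc m. ennreal (if n \<le> m then y * q^(m - n) else 0))"
    by (rule suminf_finite) auto
  also have "\<dots> = (\<Sum>n<Suc m. ennreal (y * q^(m - n)))"
    by (intro sum.cong) auto
  also have "\<dots> = ennreal (y * (\<Sum>n<Suc m. q^(m - n)))"
    using q y by (simp add: sum_distrib_left del: sum.lessThan_Suc)
  also have "\<dots> \<le> ennreal (y * (1 / (1 - q)))"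
    using le by (rule ennreal_leI)
  also have "\<dots> = ennreal (1 / (1 - q)) * ennreal y"
    using q y by (subst ennreal_mult[symmetric]) (simp_all add: mult.commute)
  finally show ?thesis .
qed

lemma suminf_square_geometric_convolution_le:
  fixes x :: "nat \<Rightarrow> real" and q :: real
  assumes x: "\<And>m. 0 \<le> x m" and q: "0 \<le> q" "q < 1"
  shows "(\<Sum>n. (\<Sum>m. ennreal (if n \<le> m then x m * q^(m - n) else 0))^2)
           \<le> ennreal (1 / (1 - q)^2) * (\<Sum>m. ennreal ((x m)^2))"
proof -
  define T where "T n m = ennreal (if n \<le> m then (x m)^2 * q^(m - n) else 0)" for n m
  have "(\<Sum>n. (\<Sum>m. ennreal (if n \<le> m then x m * q^(m - n) else 0))^2)
      \<le> (\<Sum>n. ennreal (1 / (1 - q)) * (\<Sum>m. T n m))"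
    unfolding T_def by (intro suminf_le square_suminf_geometric_convolution_le x q) auto
  also have "\<dots> = ennreal (1 / (1 - q)) * (\<Sum>m. \<Sum>n. T n m)"
    by (simp add: suminf_ennreal_commute[of T])
  also have "\<dots> \<le> ennreal (1 / (1 - q)) * (\<Sum>m. ennreal (1 / (1 - q)) * ennreal ((x m)^2))"
    unfolding T_def by (intro mult_left_mono suminf_le suminf_geometric_weights_le q) auto
  also have "\<dots> = ennreal (1 / (1 - q)) * ennreal (1 / (1 - q)) * (\<Sum>m. ennreal ((x m)^2))"
    by (simp only: ennreal_suminf_cmult mult.assoc)
  also have "ennreal (1 / (1 - q)) * ennreal (1 / (1 - q)) = ennreal (1 / (1 - q)^2)"
    using q by (simp add: ennreal_mult[symmetric] power2_eq_square)
  finally show ?thesis .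
qed

section \<open>Square integrable functions on an interval\<close>

locale L2_interval =
  fixes a b :: ereal
begin

abbreviation "I \<equiv> Ioo_e a b"
abbreviation "LI \<equiv> lebesgue_on I"

text \<open>The squared norm as an extended real: unlike \<^const>\<open>L2norm\<close> it is meaningful for
  every measurable function.\<close>
definition sqnorm :: "(real \<Rightarrow> complex) \<Rightarrow> ennreal" where
  "sqnorm f = (\<integral>\<^sup>+x. ennreal (cmod (f x))^2 \<partial>LI)"

lemma L2_measurable: "L2 a b f \<Longrightarrow> f \<in> borel_measurable LI"
  by (simp add: L2_def)

lemma L2_iff_sqnorm: "L2 a b f \<longleftrightarrow> f \<in> borel_measurable LI \<and> sqnorm f < \<infinity>"
  unfolding L2_def sqnorm_def
  by (auto simp: integrable_iff_bounded ennreal_power)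

lemma L2norm_nonneg: "0 \<le> L2norm a b f"
  by (simp add: L2norm_def)

lemma L2norm_sq: "(L2norm a b f)^2 = (\<integral>x. (cmod (f x))^2 \<partial>LI)"
  by (simp add: L2norm_def integral_nonneg_AE)

lemma sqnorm_eq_L2norm:
  assumes "L2 a b f"
  shows "sqnorm f = ennreal ((L2norm a b f)^2)"
proof -
  have "integrable LI (\<lambda>x. (cmod (f x))^2)"
    using assms by (simp add: L2_def)
  then show ?thesis
    unfolding sqnorm_def L2norm_sq by (simp add: nn_integral_eq_integral ennreal_power)
qed

lemma sqnorm_le_imp_L2norm_le:
  assumes g: "g \<in> borel_measurable LI" and le: "sqnorm g \<le> ennreal (B^2)" and B: "0 \<le> B"
  shows "L2 a b g" "L2norm a b g \<le> B"
proof -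
  show L2: "L2 a b g"
    using g le by (simp add: L2_iff_sqnorm order_le_less_trans)
  have "(L2norm a b g)^2 \<le> B^2"
    using le by (simp add: sqnorm_eq_L2norm[OF L2] ennreal_le_iff)
  then show "L2norm a b g \<le> B"
    using B by (rule power2_le_imp_le)
qed

lemma nn_integral_norm_mult_le_L2norm:
  assumes f: "L2 a b f" and g: "L2 a b g"
  shows "(\<integral>\<^sup>+x. ennreal (cmod (f x)) * ennreal (cmod (g x)) \<partial>LI) \<le> ennreal (L2norm a b f * L2norm a b g)"
proof -
  have [measurable]: "f \<in> borel_measurable LI" "g \<in> borel_measurable LI"
    using f g by (simp_all add: L2_measurable)
  have "(\<integral>\<^sup>+x. ennreal (cmod (f x)) * ennreal (cmod (g x)) \<partial>LI)^2 \<le> sqnorm f * sqnorm g"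
    unfolding sqnorm_def by (rule Cauchy_Schwarz_nn_integral) auto
  also have "\<dots> = (ennreal (L2norm a b f * L2norm a b g))^2"
    using f g by (simp add: sqnorm_eq_L2norm ennreal_power L2norm_nonneg ennreal_mult' power_mult_distrib)
  finally show ?thesis
    by (rule power2_le_imp_le_ennreal)
qed

lemma integrable_mult_cnj:
  assumes f: "L2 a b f" and g: "L2 a b g"
  shows "integrable LI (\<lambda>x. f x * cnj (g x))"
proof (subst integrable_iff_bounded, intro conjI)
  have [measurable]: "f \<in> borel_measurable LI" "g \<in> borel_measurable LI"
    using f g by (simp_all add: L2_measurable)
  show "(\<lambda>x. f x * cnj (g x)) \<in> borel_measurable LI"
    by measurable
  have "(\<integral>\<^sup>+x. ennreal (norm (f x * cnj (g x))) \<partial>LI) \<le> ennreal (L2norm a b f * L2norm a b g)"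
    using nn_integral_norm_mult_le_L2norm[OF f g] by (simp add: norm_mult ennreal_mult)
  then show "(\<integral>\<^sup>+x. ennreal (norm (f x * cnj (g x))) \<partial>LI) < \<infinity>"
    by (simp add: order_le_less_trans)
qed

lemma norm_L2inner_le:
  assumes f: "L2 a b f" and g: "L2 a b g"
  shows "cmod (L2inner a b f g) \<le> L2norm a b f * L2norm a b g"
proof -
  have "ennreal (cmod (L2inner a b f g)) \<le> (\<integral>\<^sup>+x. ennreal (cmod (f x * cnj (g x))) \<partial>LI)"
    unfolding L2inner_def by (rule integral_norm_bound_ennreal[OF integrable_mult_cnj[OF f g]])
  also have "\<dots> \<le> ennreal (L2norm a b f * L2norm a b g)"
    using nn_integral_norm_mult_le_L2norm[OF f g] by (simp add: norm_mult ennreal_mult)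
  finally show ?thesis
    by (simp add: ennreal_le_iff L2norm_nonneg)
qed

lemma L2_dominated:
  assumes g: "g \<in> borel_measurable LI" and f: "L2 a b f"
    and le: "\<And>x. x \<in> I \<Longrightarrow> cmod (g x) \<le> C * cmod (f x)"
  shows "L2 a b g"
proof -
  have [measurable]: "f \<in> borel_measurable LI"
    using f by (rule L2_measurable)
  have "sqnorm g \<le> (\<integral>\<^sup>+x. ennreal (C^2) * ennreal (cmod (f x))^2 \<partial>LI)"
    unfolding sqnorm_def
  proof (rule nn_integral_mono)
    fix x assume "x \<in> space LI"
    then have "(cmod (g x))^2 \<le> (C * cmod (f x))^2"
      using le by (intro power_mono) simp_all
    then have "ennreal ((cmod (g x))^2) \<le> ennreal (C^2 * (cmod (f x))^2)"
      by (simp add: power_mult_distrib ennreal_leI)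
    then show "ennreal (cmod (g x))^2 \<le> ennreal (C^2) * ennreal (cmod (f x))^2"
      by (simp add: ennreal_power ennreal_mult)
  qed
  also have "\<dots> = ennreal (C^2) * sqnorm f"
    unfolding sqnorm_def by (rule nn_integral_cmult) measurable
  also have "\<dots> < \<infinity>"
    using f by (simp add: sqnorm_eq_L2norm ennreal_mult_less_top)
  finally show ?thesis
    using g by (simp add: L2_iff_sqnorm)
qed

lemma L2_indicator_mult:
  assumes "S \<in> sets lebesgue" and f: "L2 a b f"
  shows "L2 a b (\<lambda>x. of_real (indicator S x) * f x)"
proof (rule L2_dominated[where C=1, OF _ f])
  have [measurable]: "f \<in> borel_measurable LI"
    using f by (rule L2_measurable)
  show "(\<lambda>x. complex_of_real (indicator S x) * f x) \<in> borel_measurable LI"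
    using assms by measurable
qed (auto simp: norm_mult indicator_def)

lemma L2_add:
  assumes f: "L2 a b f" and g: "L2 a b g"
  shows "L2 a b (\<lambda>x. f x + g x)"
proof -
  have [measurable]: "f \<in> borel_measurable LI" "g \<in> borel_measurable LI"
    using f g by (simp_all add: L2_measurable)
  have "sqnorm (\<lambda>x. f x + g x) \<le> (\<integral>\<^sup>+x. 2 * ennreal (cmod (f x))^2 + 2 * ennreal (cmod (g x))^2 \<partial>LI)"
    unfolding sqnorm_def
  proof (rule nn_integral_mono)
    fix x
    have "(cmod (f x + g x))^2 \<le> (cmod (f x) + cmod (g x))^2"
      by (simp add: norm_triangle_ineq power_mono)
    also have "\<dots> \<le> 2 * (cmod (f x))^2 + 2 * (cmod (g x))^2"
      by (simp add: power2_sum) (smt (verit) sum_squares_bound)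
    finally have "ennreal ((cmod (f x + g x))^2) \<le> ennreal (2 * (cmod (f x))^2 + 2 * (cmod (g x))^2)"
      by (rule ennreal_leI)
    then show "ennreal (cmod (f x + g x))^2 \<le> 2 * ennreal (cmod (f x))^2 + 2 * ennreal (cmod (g x))^2"
      by (simp add: ennreal_power ennreal_mult ennreal_plus)
  qed
  also have "\<dots> = 2 * sqnorm f + 2 * sqnorm g"
    unfolding sqnorm_def by (simp add: nn_integral_add nn_integral_cmult)
  also have "\<dots> < \<infinity>"
    using f g by (simp add: sqnorm_eq_L2norm ennreal_mult_less_top)
  finally show ?thesis
    by (simp add: L2_iff_sqnorm)
qed

lemma L2_cong:
  assumes "\<And>x. x \<in> I \<Longrightarrow> f x = g x"
  shows "L2 a b f = L2 a b g"
proof -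
  have "f \<in> borel_measurable LI \<longleftrightarrow> g \<in> borel_measurable LI"
    by (rule measurable_cong) (simp add: assms)
  moreover have "sqnorm f = sqnorm g"
    unfolding sqnorm_def by (rule nn_integral_cong) (simp add: assms)
  ultimately show ?thesis
    by (simp add: L2_iff_sqnorm)
qed

lemma L2inner_commute: "L2inner a b g f = cnj (L2inner a b f g)"
proof -
  have "cnj (L2inner a b f g) = (\<integral>x. cnj (f x * cnj (g x)) \<partial>LI)"
    unfolding L2inner_def by (rule Bochner_Integration.integral_cnj[symmetric])
  then show ?thesis
    by (simp add: L2inner_def mult.commute)
qed

lemma L2inner_midpoint:
  assumes "L2 a b u" "L2 a b v" "L2 a b g"
  shows "L2inner a b (\<lambda>x. (u x + v x) / 2) g = (L2inner a b u g + L2inner a b v g) / 2"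
proof -
  have "integrable LI (\<lambda>x. u x * cnj (g x))" "integrable LI (\<lambda>x. v x * cnj (g x))"
    using assms by (simp_all add: integrable_mult_cnj)
  then show ?thesis
    by (simp add: L2inner_def add_divide_distrib distrib_right)
qed

lemma L2inner_self: "L2inner a b f f = of_real ((L2norm a b f)^2)"
proof -
  have "L2inner a b f f = (\<integral>x. complex_of_real ((cmod (f x))^2) \<partial>LI)"
    unfolding L2inner_def by (simp only: complex_norm_square)
  also have "\<dots> = of_real ((L2norm a b f)^2)"
    unfolding L2norm_sq by (rule integral_complex_of_real)
  finally show ?thesis .
qed

lemma L2_midpoint:
  assumes u: "L2 a b u" and v: "L2 a b v"
  shows "L2 a b (\<lambda>x. (u x + v x) / 2)"
proof (rule L2_dominated[where C=1, OF _ L2_add[OF u v]])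
  have [measurable]: "u \<in> borel_measurable LI" "v \<in> borel_measurable LI"
    using u v by (simp_all add: L2_measurable)
  show "(\<lambda>x. (u x + v x) / 2) \<in> borel_measurable LI"
    by measurable
qed (simp add: norm_divide)

lemma L2norm_midpoint_le:
  assumes u: "L2 a b u" and v: "L2 a b v"
  shows "(L2norm a b (\<lambda>x. (u x + v x) / 2))^2 \<le> ((L2norm a b u)^2 + (L2norm a b v)^2) / 2"
proof -
  have pointwise: "(cmod ((u x + v x) / 2))^2 \<le> ((cmod (u x))^2 + (cmod (v x))^2) / 2" for x
  proof -
    have "cmod ((u x + v x) / 2) \<le> (cmod (u x) + cmod (v x)) / 2"
      by (simp add: norm_divide divide_right_mono norm_triangle_ineq)
    then have "(cmod ((u x + v x) / 2))^2 \<le> ((cmod (u x) + cmod (v x)) / 2)^2"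
      by (intro power_mono) simp_all
    also have "\<dots> \<le> ((cmod (u x))^2 + (cmod (v x))^2) / 2"
      using sum_squares_bound[of "cmod (u x)" "cmod (v x)"] by (simp add: power2_sum power_divide)
    finally show ?thesis .
  qed
  have "(\<integral>x. (cmod ((u x + v x) / 2))^2 \<partial>LI) \<le> (\<integral>x. ((cmod (u x))^2 + (cmod (v x))^2) / 2 \<partial>LI)"
    using L2_midpoint[OF u v] u v by (intro integral_mono pointwise) (auto simp: L2_def)
  then show ?thesis
    using u v by (simp add: L2norm_sq L2_def)
qed

lemma sqnorm_indicator:
  "sqnorm (\<lambda>x. of_real (indicator S x) * f x) = (\<integral>\<^sup>+x. indicator S x * ennreal (cmod (f x))^2 \<partial>LI)"
  unfolding sqnorm_def by (intro nn_integral_cong) (simp add: indicator_def)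

text \<open>Monotone convergence along truncations \<open>(a, r)\<close>, \<open>r \<rightarrow> b\<close>.\<close>
lemma sqnorm_le_if_truncations_le:
  assumes ab: "a < b" and h[measurable]: "h \<in> borel_measurable LI"
    and bound: "\<And>r. a < ereal r \<Longrightarrow> ereal r < b \<Longrightarrow>
                  sqnorm (\<lambda>x. of_real (indicator (Ioo_e a (ereal r)) x) * h x) \<le> B"
  shows "sqnorm h \<le> B"
proof -
  obtain X :: "nat \<Rightarrow> real" where X: "incseq X" "\<And>i. a < X i" "\<And>i. X i < b" "(\<lambda>i. ereal (X i)) \<longlonglongrightarrow> b"
    using ereal_incseq_approx[OF ab] by blast
  define F where "F n x = indicator (Ioo_e a (X n)) x * ennreal (cmod (h x))^2" for n x
  have "sqnorm h = (\<integral>\<^sup>+x. (SUP n. F n x) \<partial>LI)"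
    unfolding sqnorm_def
  proof (rule nn_integral_cong)
    fix x assume "x \<in> space LI"
    then have "ereal x < b" "a < ereal x"
      by (simp_all add: Ioo_e_def)
    then have "eventually (\<lambda>n. ereal x < ereal (X n)) sequentially"
      using order_tendstoD(1)[OF X(4)] by blast
    then obtain n where "x < X n"
      by (auto simp: eventually_sequentially)
    with \<open>a < ereal x\<close> have "F n x = ennreal (cmod (h x))^2"
      by (simp add: F_def Ioo_e_def)
    moreover have "F m x \<le> ennreal (cmod (h x))^2" for m
      by (simp add: F_def indicator_def)
    ultimately show "ennreal (cmod (h x))^2 = (SUP n. F n x)"
      by (metis (mono_tags, lifting) SUP_upper UNIV_I antisym SUP_least)
  qed
  also have "\<dots> = (SUP n. \<integral>\<^sup>+x. F n x \<partial>LI)"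
  proof (rule nn_integral_monotone_convergence_SUP)
    show "incseq F"
      using X(1) by (auto simp: incseq_def le_fun_def F_def indicator_def Ioo_e_def
          intro: order.strict_trans2)
  qed (simp add: F_def)
  also have "\<dots> \<le> B"
    using bound X(2,3) by (simp add: SUP_least F_def flip: sqnorm_indicator)
  finally show ?thesis .
qed

lemma sqnorm_indicator_Ioo_e_split:
  assumes f[measurable]: "f \<in> borel_measurable LI" and "x < y" "y < z"
  shows "sqnorm (\<lambda>s. of_real (indicator (Ioo_e x z) s) * f s) =
    sqnorm (\<lambda>s. of_real (indicator (Ioo_e x y) s) * f s) + sqnorm (\<lambda>s. of_real (indicator (Ioo_e y z) s) * f s)"
proof -
  obtain r where y: "y = ereal r"
    using assms by (cases y) auto
  have "AE s in LI. indicator (Ioo_e x z) s * ennreal (cmod (f s))^2 =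
      indicator (Ioo_e x y) s * ennreal (cmod (f s))^2 + indicator (Ioo_e y z) s * ennreal (cmod (f s))^2"
    using AE_lebesgue_on_neq[OF sets_lebesgue_Ioo_e, of r]
  proof eventually_elim
    case (elim s)
    have "indicator (Ioo_e x z) s = (indicator (Ioo_e x y) s + indicator (Ioo_e y z) s :: ennreal)"
    proof (cases "s < r")
      case True
      then have "ereal s < y"
        by (simp add: y)
      then have "ereal s < z"
        using \<open>y < z\<close> by (rule order.strict_trans)
      with True show ?thesis
        by (simp add: indicator_def Ioo_e_def y)
    next
      case False
      with elim have "y < ereal s"
        by (simp add: y)
      with \<open>x < y\<close> have "x < ereal s"
        by (rule order.strict_trans)
      with False elim show ?thesis
        by (simp add: indicator_def Ioo_e_def y)
    qed
    then show ?case
      by (simp add: distrib_right)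
  qed
  then show ?thesis
    by (simp add: sqnorm_indicator nn_integral_cong_AE nn_integral_add)
qed

end

section \<open>The integral operator and its formal adjoint\<close>

locale integral_operator = L2_interval +
  fixes \<kappa> \<phi> :: "real \<Rightarrow> complex"
  assumes ab: "a < b"
    and \<kappa>_L2: "L2 a b \<kappa>"
    and \<phi>_measurable [measurable]: "\<phi> \<in> borel_measurable LI"
    and \<phi>_L2_truncated: "\<And>r. a < ereal r \<Longrightarrow> ereal r < b \<Longrightarrow>
          L2 a b (\<lambda>x. of_real (indicator (Ioo_e a (ereal r)) x) * \<phi> x)"
begin

abbreviation "T \<equiv> intop b \<phi> \<kappa>"
abbreviation "D \<equiv> intop_dom a b \<phi> \<kappa>"

lemma \<kappa>_measurable [measurable]: "\<kappa> \<in> borel_measurable LI"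
  using \<kappa>_L2 by (rule L2_measurable)

lemma sigma_finite_LI: "sigma_finite_measure LI"
  by (rule sigma_finite_lebesgue_on) simp

definition tail_integral :: "(real \<Rightarrow> complex) \<Rightarrow> real \<Rightarrow> complex" where
  "tail_integral f t = (\<integral>s. indicator {t<..} s *\<^sub>R (f s * cnj (\<kappa> s)) \<partial>LI)"

lemma intop_eq_tail_integral:
  assumes t: "t \<in> I"
  shows "T f t = \<phi> t * tail_integral f t"
proof -
  let ?k = "\<lambda>s. f s * cnj (\<kappa> s)"
  have "indicator (Ioo_e (ereal t) b) s = (indicator I s * indicator {t<..} s :: real)" for s
    using t by (auto simp: Ioo_e_def indicator_def intro: order.strict_trans)
  then have "integral\<^sup>L (lebesgue_on (Ioo_e (ereal t) b)) ?k =
      (\<integral>s. indicator I s *\<^sub>R (indicator {t<..} s *\<^sub>R ?k s) \<partial>lebesgue)"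
    by (simp add: integral_restrict_space)
  also have "\<dots> = tail_integral f t"
    unfolding tail_integral_def by (rule integral_restrict_space[symmetric]) simp
  finally show ?thesis
    by (simp add: intop_def)
qed

lemma tail_integral_measurable [measurable]:
  assumes [measurable]: "f \<in> borel_measurable LI"
  shows "tail_integral f \<in> borel_measurable LI"
proof -
  interpret sigma_finite_measure LI
    by (rule sigma_finite_LI)
  have "(\<lambda>(t, s). indicator {t<..} s *\<^sub>R (f s * cnj (\<kappa> s))) =
      (\<lambda>p. (if fst p < snd p then 1 else 0::real) *\<^sub>R (f (snd p) * cnj (\<kappa> (snd p))))"
    by (auto simp: fun_eq_iff indicator_def)
  then have "(\<lambda>(t, s). indicator {t<..} s *\<^sub>R (f s * cnj (\<kappa> s))) \<in> borel_measurable (LI \<Otimes>\<^sub>M LI)"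
    by simp
  then show ?thesis
    unfolding tail_integral_def[abs_def] by (rule borel_measurable_lebesgue_integral)
qed

lemma integrable_mult_cnj_\<kappa>: "L2 a b f \<Longrightarrow> integrable LI (\<lambda>s. f s * cnj (\<kappa> s))"
  using integrable_mult_cnj \<kappa>_L2 by blast

lemma integrable_tail_integrand:
  assumes f: "L2 a b f"
  shows "integrable LI (\<lambda>s. indicator {t<..} s *\<^sub>R (f s * cnj (\<kappa> s)))"
proof (rule Bochner_Integration.integrable_bound[OF integrable_mult_cnj_\<kappa>[OF f]])
  have [measurable]: "f \<in> borel_measurable LI"
    using f by (rule L2_measurable)
  show "(\<lambda>s. indicator {t<..} s *\<^sub>R (f s * cnj (\<kappa> s))) \<in> borel_measurable LI"
    by measurable
qed (auto simp: indicator_def)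

lemma norm_tail_integral_le:
  assumes f: "L2 a b f"
  shows "cmod (tail_integral f t) \<le> (\<integral>s. cmod (f s * cnj (\<kappa> s)) \<partial>LI)"
  unfolding tail_integral_def
  using integrable_mult_cnj_\<kappa>[OF f]
  by (intro integral_norm_bound[THEN order_trans] integral_mono integrable_norm integrable_tail_integrand f)
     (auto simp: indicator_def)

lemma tail_integral_eq_0:
  assumes "\<And>s. s \<in> I \<Longrightarrow> t < s \<Longrightarrow> f s = 0"
  shows "tail_integral f t = 0"
proof -
  have "tail_integral f t = (\<integral>s. (0::complex) \<partial>LI)"
    unfolding tail_integral_def by (rule Bochner_Integration.integral_cong) (auto simp: assms indicator_def)
  then show ?thesis
    by simp
qed

lemma tail_integral_indicator_\<kappa>:
  assumes "\<And>s. s \<in> S \<Longrightarrow> t < s"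
  shows "tail_integral (\<lambda>x. of_real (indicator S x) * \<kappa> x) t =
    of_real ((L2norm a b (\<lambda>x. of_real (indicator S x) * \<kappa> x))^2)"
proof -
  have "tail_integral (\<lambda>x. of_real (indicator S x) * \<kappa> x) t =
      L2inner a b (\<lambda>x. of_real (indicator S x) * \<kappa> x) (\<lambda>x. of_real (indicator S x) * \<kappa> x)"
    unfolding tail_integral_def L2inner_def
    by (rule Bochner_Integration.integral_cong) (auto simp: indicator_def assms)
  then show ?thesis
    by (simp add: L2inner_self)
qed

lemma intop_eq_0_if_vanishes_right:
  assumes "\<And>x. x \<in> I \<Longrightarrow> r \<le> x \<Longrightarrow> f x = 0" and "t \<in> I" "r \<le> t"
  shows "T f t = 0"
  using assms by (simp add: intop_eq_tail_integral tail_integral_eq_0)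

lemma intop_dom_if_vanishes_right:
  assumes f: "L2 a b f" and r: "a < ereal r" "ereal r < b"
    and vanish: "\<And>x. x \<in> I \<Longrightarrow> r \<le> x \<Longrightarrow> f x = 0"
  shows "f \<in> D"
proof -
  have [measurable]: "f \<in> borel_measurable LI"
    using f by (rule L2_measurable)
  let ?A = "\<integral>s. cmod (f s * cnj (\<kappa> s)) \<partial>LI"
  have "L2 a b (\<lambda>t. \<phi> t * tail_integral f t)"
  proof (rule L2_dominated[where C="?A", OF _ \<phi>_L2_truncated[OF r]])
    show "(\<lambda>t. \<phi> t * tail_integral f t) \<in> borel_measurable LI"
      by measurable
    fix t assume t: "t \<in> I"
    show "cmod (\<phi> t * tail_integral f t) \<le> ?A * cmod (of_real (indicator (Ioo_e a (ereal r)) t) * \<phi> t)"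
    proof (cases "t < r")
      case True
      with t have "indicator (Ioo_e a (ereal r)) t = (1::real)"
        by (simp add: Ioo_e_def)
      then show ?thesis
        using norm_tail_integral_le[OF f, of t] by (simp add: norm_mult mult.commute mult_left_mono)
    next
      case False
      then have "tail_integral f t = 0"
        using vanish by (intro tail_integral_eq_0) auto
      then show ?thesis
        by (simp add: integral_nonneg_AE)
    qed
  qed
  then have "L2 a b (T f)"
    by (subst L2_cong[of _ "\<lambda>t. \<phi> t * tail_integral f t"]) (simp_all add: intop_eq_tail_integral)
  with f show ?thesis
    by (simp add: intop_dom_def)
qed

definition adj_intop :: "(real \<Rightarrow> complex) \<Rightarrow> real \<Rightarrow> complex" where
  "adj_intop f s = \<kappa> s * (\<integral>t. indicator {..<s} t *\<^sub>R (f t * cnj (\<phi> t)) \<partial>LI)"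

lemma adj_intop_measurable [measurable]:
  assumes [measurable]: "f \<in> borel_measurable LI"
  shows "adj_intop f \<in> borel_measurable LI"
proof -
  interpret sigma_finite_measure LI
    by (rule sigma_finite_LI)
  have "(\<lambda>(s, t). indicator {..<s} t *\<^sub>R (f t * cnj (\<phi> t))) =
      (\<lambda>p. (if snd p < fst p then 1 else 0::real) *\<^sub>R (f (snd p) * cnj (\<phi> (snd p))))"
    by (auto simp: fun_eq_iff indicator_def)
  then have "(\<lambda>(s, t). indicator {..<s} t *\<^sub>R (f t * cnj (\<phi> t))) \<in> borel_measurable (LI \<Otimes>\<^sub>M LI)"
    by simp
  then have "(\<lambda>s. \<integral>t. indicator {..<s} t *\<^sub>R (f t * cnj (\<phi> t)) \<partial>LI) \<in> borel_measurable LI"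
    by (rule borel_measurable_lebesgue_integral)
  then show ?thesis
    unfolding adj_intop_def[abs_def] by measurable
qed

lemma integrable_mult_cnj_\<phi>_if_vanishes_right:
  assumes f: "L2 a b f" and r: "a < ereal r" "ereal r < b"
    and vanish: "\<And>x. x \<in> I \<Longrightarrow> r \<le> x \<Longrightarrow> f x = 0"
  shows "integrable LI (\<lambda>t. f t * cnj (\<phi> t))"
proof (subst Bochner_Integration.integrable_cong[OF refl])
  show "f t * cnj (\<phi> t) = f t * cnj (of_real (indicator (Ioo_e a (ereal r)) t) * \<phi> t)"
    if "t \<in> space LI" for t
    using that vanish[of t] by (cases "t < r") (auto simp: Ioo_e_def)
qed (rule integrable_mult_cnj[OF f \<phi>_L2_truncated[OF r]])

lemma L2_adj_intop_if_vanishes_right: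
  assumes f: "L2 a b f" and r: "a < ereal r" "ereal r < b"
    and vanish: "\<And>x. x \<in> I \<Longrightarrow> r \<le> x \<Longrightarrow> f x = 0"
  shows "L2 a b (adj_intop f)"
proof -
  let ?W = "\<lambda>t. f t * cnj (\<phi> t)"
  have W: "integrable LI ?W"
    using assms by (rule integrable_mult_cnj_\<phi>_if_vanishes_right)
  have [measurable]: "f \<in> borel_measurable LI"
    using f by (rule L2_measurable)
  have "cmod (\<integral>t. indicator {..<s} t *\<^sub>R ?W t \<partial>LI) \<le> (\<integral>t. cmod (?W t) \<partial>LI)" for s
    using W by (intro integral_norm_bound[THEN order_trans] integral_mono integrable_norm
        Bochner_Integration.integrable_bound[OF W]) (auto simp: indicator_def)
  then have "cmod (adj_intop f s) \<le> (\<integral>t. cmod (?W t) \<partial>LI) * cmod (\<kappa> s)" for s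
    by (simp add: adj_intop_def norm_mult mult.commute mult_left_mono)
  then show ?thesis
    by (intro L2_dominated[OF _ \<kappa>_L2]) simp_all
qed

lemma adjoint_pair_adj_intop:
  assumes f: "L2 a b f" and r: "a < ereal r" "ereal r < b"
    and vanish: "\<And>x. x \<in> I \<Longrightarrow> r \<le> x \<Longrightarrow> f x = 0"
  shows "adjoint_pair a b D T f (adj_intop f)"
  unfolding adjoint_pair_def
proof (intro conjI ballI f L2_adj_intop_if_vanishes_right[OF assms])
  fix g assume "g \<in> D"
  then have g: "L2 a b g"
    by (simp add: intop_dom_def)
  let ?U = "\<lambda>t. \<phi> t * cnj (f t)" and ?V = "\<lambda>s. g s * cnj (\<kappa> s)"
  have U: "integrable LI ?U"
    using integrable_cnj[OF integrable_mult_cnj_\<phi>_if_vanishes_right[OF assms]] by (simp add: mult.commute)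
  have "L2inner a b (T g) f = (\<integral>t. ?U t * (\<integral>s. indicator {t<..} s *\<^sub>R ?V s \<partial>LI) \<partial>LI)"
    unfolding L2inner_def
    by (rule Bochner_Integration.integral_cong) (simp_all add: intop_eq_tail_integral tail_integral_def mult_ac)
  also have "\<dots> = (\<integral>s. ?V s * (\<integral>t. indicator {..<s} t *\<^sub>R ?U t \<partial>LI) \<partial>LI)"
    using U integrable_mult_cnj_\<kappa>[OF g] by (intro integral_mult_integral_greaterThan_swap) simp_all
  also have "\<dots> = L2inner a b g (adj_intop f)"
    unfolding L2inner_def adj_intop_def
    by (simp add: mult_ac scaleR_conv_of_real flip: Bochner_Integration.integral_cnj)
  finally show "L2inner a b (T g) f = L2inner a b g (adj_intop f)" .
qed

lemma L2inner_intop_eq_0_if_separated: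
  assumes g_vanish: "\<And>x. x \<in> I \<Longrightarrow> r \<le> x \<Longrightarrow> g x = 0"
    and f_vanish: "\<And>x. x \<in> I \<Longrightarrow> x < r \<Longrightarrow> f x = 0"
  shows "L2inner a b (T g) f = 0"
proof -
  have "T g t * cnj (f t) = 0" if "t \<in> I" for t
    using that g_vanish f_vanish intop_eq_0_if_vanishes_right[of r g t] by (cases "t < r") auto
  then have "L2inner a b (T g) f = (\<integral>t. 0 \<partial>LI)"
    unfolding L2inner_def by (intro Bochner_Integration.integral_cong) simp_all
  then show ?thesis
    by simp
qed

lemma L2inner_intop_indicator_\<kappa>:
  assumes "\<And>t s. t \<in> R \<Longrightarrow> s \<in> S \<Longrightarrow> t < s"
  shows "L2inner a b (T (\<lambda>x. of_real (indicator S x) * \<kappa> x)) (\<lambda>x. of_real (indicator R x) * \<phi> x) =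
    of_real ((L2norm a b (\<lambda>x. of_real (indicator S x) * \<kappa> x))^2 * (L2norm a b (\<lambda>x. of_real (indicator R x) * \<phi> x))^2)"
proof -
  let ?F = "(L2norm a b (\<lambda>x. of_real (indicator S x) * \<kappa> x))^2"
  let ?g = "\<lambda>x. of_real (indicator R x) * \<phi> x"
  have "L2inner a b (T (\<lambda>x. of_real (indicator S x) * \<kappa> x)) ?g = (\<integral>t. of_real ?F * (?g t * cnj (?g t)) \<partial>LI)"
    unfolding L2inner_def
  proof (rule Bochner_Integration.integral_cong[OF refl])
    fix t assume "t \<in> space LI"
    then show "T (\<lambda>x. of_real (indicator S x) * \<kappa> x) t * cnj (?g t) = of_real ?F * (?g t * cnj (?g t))"
      using assms by (cases "t \<in> R") (simp_all add: intop_eq_tail_integral tail_integral_indicator_\<kappa>)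
  qed
  also have "\<dots> = of_real ?F * L2inner a b ?g ?g"
    unfolding L2inner_def by (rule integral_mult_right_zero)
  finally show ?thesis
    by (simp add: L2inner_self)
qed

subsection \<open>Boundedness of \<open>T\<close> implies boundedness of \<open>Re T\<close>\<close>

text \<open>Testing the adjoint relation with the truncations \<open>g\<close> of \<open>h\<close>, which lie in the domain,
  gives \<open>\<parallel>g\<parallel>\<^sup>2 = \<langle>T g, f\<rangle> \<le> C \<parallel>g\<parallel> \<parallel>f\<parallel>\<close>.\<close>
lemma L2norm_adjoint_le:
  assumes C: "0 \<le> C" and bound: "\<And>g. g \<in> D \<Longrightarrow> L2norm a b (T g) \<le> C * L2norm a b g"
    and f: "L2 a b f" and adj: "adjoint_pair a b D T f h"
  shows "L2norm a b h \<le> C * L2norm a b f"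
proof -
  have h: "L2 a b h" and adj_eq: "\<And>g. g \<in> D \<Longrightarrow> L2inner a b (T g) f = L2inner a b g h"
    using adj by (simp_all add: adjoint_pair_def)
  have [measurable]: "h \<in> borel_measurable LI"
    using h by (rule L2_measurable)
  have Cf: "0 \<le> C * L2norm a b f"
    using C by (simp add: L2norm_nonneg)
  have "sqnorm h \<le> ennreal ((C * L2norm a b f)^2)"
  proof (rule sqnorm_le_if_truncations_le[OF ab])
    fix r assume r: "a < ereal r" "ereal r < b"
    define g where "g x = of_real (indicator (Ioo_e a (ereal r)) x) * h x" for x
    have g: "L2 a b g"
      unfolding g_def by (rule L2_indicator_mult[OF _ h]) simp
    have gD: "g \<in> D"
      by (rule intop_dom_if_vanishes_right[OF g r]) (simp add: g_def Ioo_e_def)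
    have "L2inner a b g h = L2inner a b g g"
      unfolding L2inner_def by (rule Bochner_Integration.integral_cong) (simp_all add: g_def indicator_def)
    then have "L2inner a b (T g) f = of_real ((L2norm a b g)^2)"
      using adj_eq[OF gD] by (simp add: L2inner_self)
    moreover have "L2 a b (T g)"
      using gD by (simp add: intop_dom_def)
    ultimately have "(L2norm a b g)^2 \<le> L2norm a b (T g) * L2norm a b f"
      using norm_L2inner_le[OF _ f, of "T g"] by (simp del: of_real_power)
    also have "\<dots> \<le> C * L2norm a b g * L2norm a b f"
      by (intro mult_right_mono bound gD L2norm_nonneg)
    finally have "L2norm a b g \<le> C * L2norm a b f"
      using Cf L2norm_nonneg[of g] by (cases "L2norm a b g = 0") (simp_all add: power2_eq_square mult_ac)
    then show "sqnorm g \<le> ennreal ((C * L2norm a b f)^2)"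
      by (simp add: sqnorm_eq_L2norm[OF g] ennreal_leI power_mono L2norm_nonneg)
  qed measurable
  then show ?thesis
    using Cf by (rule sqnorm_le_imp_L2norm_le(2)[rotated]) simp
qed

lemma re_op_bounded_if_op_bounded:
  assumes "op_bounded a b D T"
  shows "re_op_bounded a b D T"
proof -
  obtain C0 where C0: "\<And>f. f \<in> D \<Longrightarrow> L2norm a b (T f) \<le> C0 * L2norm a b f"
    using assms unfolding op_bounded_def by blast
  define C where "C = max C0 0"
  have C: "0 \<le> C"
    by (simp add: C_def)
  have bound: "L2norm a b (T f) \<le> C * L2norm a b f" if "f \<in> D" for f
  proof -
    have "C0 * L2norm a b f \<le> C * L2norm a b f"
      unfolding C_def by (intro mult_right_mono L2norm_nonneg) simp
    then show ?thesis
      using C0[OF that] by linarith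
  qed
  have "L2norm a b (\<lambda>x. (T f x + h x) / 2) \<le> C * L2norm a b f"
    if fD: "f \<in> D" and adj: "adjoint_pair a b D T f h" for f h
  proof -
    have f: "L2 a b f" and Tf: "L2 a b (T f)" and h: "L2 a b h"
      using fD adj by (simp_all add: intop_dom_def adjoint_pair_def)
    have "(L2norm a b (T f))^2 \<le> (C * L2norm a b f)^2"
      using bound[OF fD] by (intro power_mono L2norm_nonneg)
    moreover have "(L2norm a b h)^2 \<le> (C * L2norm a b f)^2"
      using L2norm_adjoint_le[OF C bound f adj] by (intro power_mono L2norm_nonneg)
    ultimately have "((L2norm a b (T f))^2 + (L2norm a b h)^2) / 2 \<le> (C * L2norm a b f)^2"
      by simp
    with L2norm_midpoint_le[OF Tf h]
    have "(L2norm a b (\<lambda>x. (T f x + h x) / 2))^2 \<le> (C * L2norm a b f)^2"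
      by (rule order_trans)
    then show ?thesis
      by (rule power2_le_imp_le) (simp add: C L2norm_nonneg)
  qed
  then show ?thesis
    unfolding re_op_bounded_def by blast
qed

end

section \<open>The dyadic partition\<close>

locale dyadic_partition = integral_operator +
  fixes c :: "nat \<Rightarrow> ereal"
  assumes c0: "c 0 = a"
    and c_less_Suc: "\<And>n. c n < c (Suc n)"
    and c_less_b: "\<And>n. c n < b"
    and c_norm: "\<And>n. (L2norm a b (\<lambda>x. of_real (indicator (Ioo_e (c n) b) x) * \<kappa> x))\<^sup>2
                       = (1/2) ^ n * (L2norm a b \<kappa>)\<^sup>2"
begin

text \<open>\<open>J 0 = Ioo_e a a\<close> is empty, since \<open>0 - 1 = 0\<close> in \<^typ>\<open>nat\<close>.\<close>
definition J :: "nat \<Rightarrow> real set" where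
  "J n = Ioo_e (c (n - 1)) (c n)"

lemma sets_J [measurable]: "J n \<in> sets lebesgue"
  by (simp add: J_def)

lemma mem_J: "x \<in> J n \<longleftrightarrow> c (n - 1) < ereal x \<and> ereal x < c n"
  by (simp add: J_def Ioo_e_def)

definition piece_norm :: "(real \<Rightarrow> complex) \<Rightarrow> nat \<Rightarrow> real" where
  "piece_norm f n = L2norm a b (\<lambda>x. of_real (indicator (J n) x) * f x)"

lemma piece_norm_nonneg: "0 \<le> piece_norm f n"
  by (simp add: piece_norm_def L2norm_nonneg)

lemma c_strict_mono: "strict_mono c"
  using c_less_Suc by (rule strict_mono_Suc_iff[THEN iffD2, rule_format])

lemma c_gt_a: "0 < n \<Longrightarrow> a < c n"
  using strict_monoD[OF c_strict_mono, of 0 n] c0 by simp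

lemma c_finite: "0 < n \<Longrightarrow> c n = ereal (real_of_ereal (c n))"
  using c_gt_a[of n] c_less_b[of n] by (cases "c n") auto

lemma J_empty: "J 0 = {}"
  by (auto simp: mem_J c0 dest: less_asym)

lemma J_subset_truncation: "0 < n \<Longrightarrow> J n \<subseteq> Ioo_e a (c n)"
  using monoD[OF strict_mono_mono[OF c_strict_mono], of 0 "n - 1"] c0
  by (auto simp: mem_J Ioo_e_def intro: order.strict_trans1)

lemma disjoint_family_J: "disjoint_family J"
proof -
  have "x \<notin> J n" if "m < n" "x \<in> J m" for m n x
  proof
    assume "x \<in> J n"
    then have "c (n - 1) < ereal x"
      by (simp add: mem_J)
    moreover have "c m \<le> c (n - 1)"
      using \<open>m < n\<close> by (simp add: strict_mono_less_eq[OF c_strict_mono])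
    moreover have "ereal x < c m"
      using \<open>x \<in> J m\<close> by (simp add: mem_J)
    ultimately show False
      by simp
  qed
  then have "J m \<inter> J n = {}" if "m < n" for m n
    using that by blast
  then show ?thesis
    unfolding disjoint_family_on_def by (metis Int_commute linorder_neqE_nat)
qed

lemma L2_piece_\<phi>:
  assumes "0 < n"
  shows "L2 a b (\<lambda>x. of_real (indicator (J n) x) * \<phi> x)"
proof -
  have r: "a < ereal (real_of_ereal (c n))" "ereal (real_of_ereal (c n)) < b"
    using c_finite[OF assms] c_gt_a[OF assms] c_less_b[of n] by simp_all
  have "J n \<subseteq> Ioo_e a (ereal (real_of_ereal (c n)))"
    using J_subset_truncation[OF assms] c_finite[OF assms] by simp
  then have "(\<lambda>x. of_real (indicator (J n) x) * \<phi> x) =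
      (\<lambda>x. of_real (indicator (J n) x) * (of_real (indicator (Ioo_e a (ereal (real_of_ereal (c n)))) x) * \<phi> x))"
    by (auto simp: fun_eq_iff indicator_def)
  then show ?thesis
    using L2_indicator_mult[OF _ \<phi>_L2_truncated[OF r]] by simp
qed

text \<open>The mass of \<open>\<kappa>\<close> on \<open>(c\<^sub>n\<^sub>-\<^sub>1, b)\<close> is \<open>2\<^sup>1\<^sup>-\<^sup>n \<parallel>\<kappa>\<parallel>\<^sup>2\<close>, of which \<open>2\<^sup>-\<^sup>n \<parallel>\<kappa>\<parallel>\<^sup>2\<close> lies
  beyond \<open>c\<^sub>n\<close>.\<close>
lemma piece_norm_\<kappa>:
  assumes n: "0 < n"
  shows "piece_norm \<kappa> n = L2norm a b \<kappa> * sqrt (1/2) ^ n"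
proof -
  let ?K = "(L2norm a b \<kappa>)^2"
  have "sqnorm (\<lambda>x. of_real (indicator (Ioo_e (c (n - 1)) b) x) * \<kappa> x) =
      sqnorm (\<lambda>x. of_real (indicator (J n) x) * \<kappa> x) + sqnorm (\<lambda>x. of_real (indicator (Ioo_e (c n) b) x) * \<kappa> x)"
    unfolding J_def using n strict_monoD[OF c_strict_mono, of "n - 1" n] c_less_b[of n]
    by (intro sqnorm_indicator_Ioo_e_split) simp_all
  then have "ennreal ((1/2)^(n - 1) * ?K) = ennreal ((piece_norm \<kappa> n)^2) + ennreal ((1/2)^n * ?K)"
    by (simp add: piece_norm_def sqnorm_eq_L2norm L2_indicator_mult \<kappa>_L2 c_norm)
  also have "\<dots> = ennreal ((piece_norm \<kappa> n)^2 + (1/2)^n * ?K)"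
    by (simp add: ennreal_plus)
  finally have "(1/2)^(n - 1) * ?K = (piece_norm \<kappa> n)^2 + (1/2)^n * ?K"
    by (subst (asm) ennreal_inj) simp_all
  moreover have "(1/2::real)^(n - 1) = 2 * (1/2)^n"
    using n by (cases n) simp_all
  ultimately have "(piece_norm \<kappa> n)^2 = (L2norm a b \<kappa> * sqrt (1/2) ^ n)^2"
    by (simp add: power_mult_distrib real_sqrt_power[symmetric] mult.commute)
  then show ?thesis
    by (rule power2_eq_imp_eq) (simp_all add: piece_norm_nonneg L2norm_nonneg)
qed

lemma piece_norm_\<kappa>_shift:
  assumes "0 < n" "n \<le> m"
  shows "piece_norm \<kappa> m = piece_norm \<kappa> n * sqrt (1/2) ^ (m - n)"
  using assms by (simp add: piece_norm_\<kappa> mult.assoc power_add[symmetric])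

abbreviation "cutpoint n \<equiv> real_of_ereal (c n)"

lemma cutpoint_in_interval: "0 < n \<Longrightarrow> a < ereal (cutpoint n) \<and> ereal (cutpoint n) < b"
  using c_finite[of n] c_gt_a[of n] c_less_b[of n] by simp

lemma piece_vanishes_right:
  assumes "0 < n" "cutpoint n \<le> x"
  shows "of_real (indicator (J n) x) * f x = 0"
proof -
  have "c n \<le> ereal x"
    by (subst c_finite[OF assms(1)]) (simp add: assms(2))
  then show ?thesis
    by (auto simp: indicator_def mem_J)
qed

lemma piece_vanishes_left:
  assumes "0 < n" "x < cutpoint n"
  shows "of_real (indicator (J (Suc n)) x) * f x = 0"
proof -
  have "ereal x < c n"
    by (subst c_finite[OF assms(1)]) (simp add: assms(2))
  then show ?thesis
    by (auto simp: indicator_def mem_J)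
qed

lemma piece_in_intop_dom:
  assumes "0 < n" "L2 a b (\<lambda>x. of_real (indicator (J n) x) * f x)"
  shows "(\<lambda>x. of_real (indicator (J n) x) * f x) \<in> D"
  using assms cutpoint_in_interval[OF assms(1)]
  by (intro intop_dom_if_vanishes_right[of _ "cutpoint n"] piece_vanishes_right) simp_all

text \<open>Test \<open>Re T\<close> on \<open>f = \<one>\<^bsub>J\<^sub>n\<^sub>+\<^sub>1\<^esub> \<kappa>\<close> against \<open>g = \<one>\<^bsub>J\<^sub>n\<^esub> \<phi>\<close>: as \<open>J\<^sub>n\<close> lies left of
  \<open>J\<^sub>n\<^sub>+\<^sub>1\<close>, we get \<open>\<langle>T f, g\<rangle> = \<parallel>f\<parallel>\<^sup>2 \<parallel>g\<parallel>\<^sup>2\<close> but \<open>\<langle>T\<^sup>* f, g\<rangle> = \<langle>f, T g\<rangle>\<^sup>* = 0\<close>.\<close>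
lemma L2inner_re_intop_pieces:
  assumes n: "0 < n"
  defines "f \<equiv> \<lambda>x. of_real (indicator (J (Suc n)) x) * \<kappa> x"
    and "g \<equiv> \<lambda>x. of_real (indicator (J n) x) * \<phi> x"
  shows "L2inner a b (\<lambda>x. (T f x + adj_intop f x) / 2) g =
    of_real ((piece_norm \<kappa> (Suc n))^2 * (piece_norm \<phi> n)^2 / 2)"
proof -
  have f: "L2 a b f"
    unfolding f_def by (simp add: L2_indicator_mult \<kappa>_L2)
  have g: "L2 a b g"
    unfolding g_def by (rule L2_piece_\<phi>[OF n])
  have fD: "f \<in> D"
    unfolding f_def by (rule piece_in_intop_dom) (simp_all add: L2_indicator_mult \<kappa>_L2)
  have gD: "g \<in> D"
    unfolding g_def by (rule piece_in_intop_dom[OF n L2_piece_\<phi>[OF n]])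
  have adj: "adjoint_pair a b D T f (adj_intop f)"
    using f cutpoint_in_interval[of "Suc n"] unfolding f_def
    by (intro adjoint_pair_adj_intop[of _ "cutpoint (Suc n)"] piece_vanishes_right) simp_all
  then have h: "L2 a b (adj_intop f)"
    by (simp add: adjoint_pair_def)
  have Tf: "L2 a b (T f)"
    using fD by (simp add: intop_dom_def)
  have "L2inner a b (T g) f = 0"
    unfolding f_def g_def using n
    by (intro L2inner_intop_eq_0_if_separated[of "cutpoint n"] piece_vanishes_right piece_vanishes_left)
  then have "L2inner a b (adj_intop f) g = 0"
    using adj gD by (simp add: adjoint_pair_def L2inner_commute[of g])
  moreover have "L2inner a b (T f) g = of_real ((piece_norm \<kappa> (Suc n))^2 * (piece_norm \<phi> n)^2)"
    unfolding f_def g_def piece_norm_def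
  proof (rule L2inner_intop_indicator_\<kappa>)
    fix t s assume "t \<in> J n" "s \<in> J (Suc n)"
    then have "ereal t < c n" "c n < ereal s"
      by (simp_all add: mem_J)
    then have "ereal t < ereal s"
      by (rule order.strict_trans)
    then show "t < s"
      by simp
  qed
  ultimately show ?thesis
    by (simp add: L2inner_midpoint[OF Tf h g])
qed

lemma piece_norms_le_if_re_op_bounded:
  assumes C: "\<And>f h. f \<in> D \<Longrightarrow> adjoint_pair a b D T f h \<Longrightarrow>
      L2norm a b (\<lambda>x. (T f x + h x) / 2) \<le> C * L2norm a b f"
    and n: "0 < n"
  shows "piece_norm \<kappa> (Suc n) * piece_norm \<phi> n \<le> 2 * \<bar>C\<bar>"
proof -
  define f where "f = (\<lambda>x. of_real (indicator (J (Suc n)) x) * \<kappa> x)"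
  define g where "g = (\<lambda>x. of_real (indicator (J n) x) * \<phi> x)"
  let ?F = "piece_norm \<kappa> (Suc n)" and ?P = "piece_norm \<phi> n"
  have f: "L2 a b f"
    unfolding f_def by (simp add: L2_indicator_mult \<kappa>_L2)
  have g: "L2 a b g"
    unfolding g_def by (rule L2_piece_\<phi>[OF n])
  have fD: "f \<in> D"
    unfolding f_def by (rule piece_in_intop_dom) (simp_all add: L2_indicator_mult \<kappa>_L2)
  have adj: "adjoint_pair a b D T f (adj_intop f)"
    using f cutpoint_in_interval[of "Suc n"] unfolding f_def
    by (intro adjoint_pair_adj_intop[of _ "cutpoint (Suc n)"] piece_vanishes_right) simp_all
  have w: "L2 a b (\<lambda>x. (T f x + adj_intop f x) / 2)"
    using fD adj by (intro L2_midpoint) (simp_all add: intop_dom_def adjoint_pair_def)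
  have eq: "L2inner a b (\<lambda>x. (T f x + adj_intop f x) / 2) g = of_real (?F^2 * ?P^2 / 2)"
    unfolding f_def g_def by (rule L2inner_re_intop_pieces[OF n])
  have "?F^2 * ?P^2 / 2 = cmod (L2inner a b (\<lambda>x. (T f x + adj_intop f x) / 2) g)"
    unfolding eq norm_of_real by simp
  also have "\<dots> \<le> L2norm a b (\<lambda>x. (T f x + adj_intop f x) / 2) * ?P"
    using norm_L2inner_le[OF w g] by (simp add: g_def piece_norm_def)
  also have "\<dots> \<le> C * ?F * ?P"
    using C[OF fD adj] by (intro mult_right_mono piece_norm_nonneg) (simp add: f_def piece_norm_def)
  also have "\<dots> \<le> \<bar>C\<bar> * (?F * ?P)"
    using piece_norm_nonneg[of \<kappa> "Suc n"] piece_norm_nonneg[of \<phi> n]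
    by (simp add: mult.assoc mult_right_mono)
  finally have "(?F * ?P) * (?F * ?P) \<le> (2 * \<bar>C\<bar>) * (?F * ?P)"
    by (simp add: power2_eq_square algebra_simps)
  then show ?thesis
    using piece_norm_nonneg[of \<kappa> "Suc n"] piece_norm_nonneg[of \<phi> n]
    by (cases "?F * ?P = 0") (auto simp: mult_le_cancel_right zero_less_mult_iff less_le)
qed

lemma omega_bounded_if_re_op_bounded:
  assumes "re_op_bounded a b D T"
  shows "\<exists>M. \<forall>n\<ge>1. piece_norm \<kappa> n * piece_norm \<phi> n \<le> M"
proof -
  obtain C where C: "\<And>f h. f \<in> D \<Longrightarrow> adjoint_pair a b D T f h \<Longrightarrow>
      L2norm a b (\<lambda>x. (T f x + h x) / 2) \<le> C * L2norm a b f"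
    using assms unfolding re_op_bounded_def by blast
  have "piece_norm \<kappa> n * piece_norm \<phi> n \<le> 2 * \<bar>C\<bar> / sqrt (1/2)" if "1 \<le> n" for n
  proof -
    have "piece_norm \<kappa> n * piece_norm \<phi> n * sqrt (1/2) = piece_norm \<kappa> (Suc n) * piece_norm \<phi> n"
      using that piece_norm_\<kappa>_shift[of n "Suc n"] by (simp add: mult_ac)
    also have "\<dots> \<le> 2 * \<bar>C\<bar>"
      using that by (intro piece_norms_le_if_re_op_bounded C) simp_all
    finally show ?thesis
      by (simp add: pos_le_divide_eq)
  qed
  then show ?thesis
    by blast
qed

subsection \<open>Boundedness of the \<open>\<omega>\<^sub>n\<close> implies boundedness of \<open>T\<close>\<close>

lemma c_less_if_outside_pieces:
  assumes t: "t \<in> I" and outside: "\<And>m. t \<notin> J m" and not_cut: "\<And>m. 0 < m \<Longrightarrow> t \<noteq> cutpoint m"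
  shows "c n < ereal t"
proof (induction n)
  case 0
  then show ?case
    using t by (simp add: c0 Ioo_e_def)
next
  case (Suc n)
  have "c (Suc n) \<noteq> ereal t"
    using not_cut[of "Suc n"] c_finite[of "Suc n"] by auto
  moreover have "\<not> ereal t < c (Suc n)"
    using Suc.IH outside[of "Suc n"] by (simp add: mem_J)
  ultimately show ?case
    by simp
qed

text \<open>All the mass of \<open>\<kappa>\<close> lies in the pieces: beyond every \<open>c\<^sub>n\<close> it is at most \<open>2\<^sup>-\<^sup>n \<parallel>\<kappa>\<parallel>\<^sup>2\<close>.\<close>
lemma \<kappa>_vanishes_beyond_cutpoints: "AE s in LI. (\<forall>n. c n < ereal s) \<longrightarrow> \<kappa> s = 0"
proof -
  let ?V = "{s. \<forall>n. c n < ereal s}"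
  have "?V \<in> sets lborel"
    by measurable
  then have [measurable]: "?V \<in> sets lebesgue"
    by (rule sets_completionI_sets)
  let ?X = "\<lambda>n. ennreal ((1/2)^n * (L2norm a b \<kappa>)^2)"
  have bound: "(\<integral>\<^sup>+s. indicator ?V s * ennreal (cmod (\<kappa> s))^2 \<partial>LI) \<le> ?X n" for n
  proof -
    have "(\<integral>\<^sup>+s. indicator ?V s * ennreal (cmod (\<kappa> s))^2 \<partial>LI)
        \<le> (\<integral>\<^sup>+s. indicator (Ioo_e (c n) b) s * ennreal (cmod (\<kappa> s))^2 \<partial>LI)"
      by (intro nn_integral_mono) (auto simp: indicator_def Ioo_e_def)
    also have "\<dots> = ?X n"
      by (simp flip: sqnorm_indicator add: sqnorm_eq_L2norm L2_indicator_mult \<kappa>_L2 c_norm)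
    finally show ?thesis .
  qed
  have "?X \<longlonglongrightarrow> ennreal 0"
    by (intro tendsto_ennrealI tendsto_mult_left_zero LIMSEQ_power_zero) simp
  then have "(\<integral>\<^sup>+s. indicator ?V s * ennreal (cmod (\<kappa> s))^2 \<partial>LI) \<le> ennreal 0"
    using bound by (intro LIMSEQ_le_const) auto
  moreover have "(\<lambda>s. indicator ?V s * ennreal (cmod (\<kappa> s))^2) \<in> borel_measurable LI"
    by measurable
  ultimately have "AE s in LI. indicator ?V s * ennreal (cmod (\<kappa> s))^2 = 0"
    by (simp add: nn_integral_0_iff_AE)
  then show ?thesis
    by eventually_elim (auto simp: indicator_def)
qed

lemma AE_not_cutpoint: "AE t in LI. \<forall>m. t \<noteq> cutpoint m"
  by (subst AE_all_countable) (intro allI AE_lebesgue_on_neq sets_lebesgue_Ioo_e)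

lemma \<kappa>_vanishes_outside_pieces: "AE s in LI. (\<forall>m. s \<notin> J m) \<longrightarrow> \<kappa> s = 0"
  using \<kappa>_vanishes_beyond_cutpoints AE_not_cutpoint AE_space
proof eventually_elim
  case (elim s)
  then show ?case
    using c_less_if_outside_pieces[of s] by auto
qed

lemma intop_vanishes_outside_pieces:
  assumes f: "L2 a b f"
  shows "AE t in LI. (\<forall>m. t \<notin> J m) \<longrightarrow> T f t = 0"
  using AE_not_cutpoint AE_space
proof eventually_elim
  case (elim t)
  show ?case
  proof
    assume outside: "\<forall>m. t \<notin> J m"
    have later_outside: "s \<notin> J m" if "t < s" for s m
    proof
      assume "s \<in> J m"
      then have "ereal s < c m"
        by (simp add: mem_J)
      also have "c m < ereal t"
        using c_less_if_outside_pieces[of t m] elim outside by auto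
      finally show False
        using \<open>t < s\<close> by simp
    qed
    have "AE s in LI. indicator {t<..} s *\<^sub>R (f s * cnj (\<kappa> s)) = 0"
      using \<kappa>_vanishes_outside_pieces
    proof eventually_elim
      case (elim s)
      then show ?case
        using later_outside[of s] by (cases "t < s") simp_all
    qed
    then have "tail_integral f t = 0"
      unfolding tail_integral_def by (rule integral_eq_zero_AE)
    then show "T f t = 0"
      using elim by (simp add: intop_eq_tail_integral)
  qed
qed

lemma suminf_indicator_J: "(\<Sum>m. indicator (J m) x :: ennreal) = indicator (\<Union>m. J m) x"
  by (rule suminf_indicator[OF disjoint_family_J])

lemma sqnorm_eq_suminf_pieces:
  assumes [measurable]: "h \<in> borel_measurable LI"
    and outside: "AE t in LI. (\<forall>m. t \<notin> J m) \<longrightarrow> h t = 0"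
  shows "sqnorm h = (\<Sum>n. sqnorm (\<lambda>x. of_real (indicator (J n) x) * h x))"
proof -
  have "sqnorm h = (\<integral>\<^sup>+x. (\<Sum>n. indicator (J n) x * ennreal (cmod (h x))^2) \<partial>LI)"
    unfolding sqnorm_def
  proof (rule nn_integral_cong_AE)
    show "AE x in LI. ennreal (cmod (h x))^2 = (\<Sum>n. indicator (J n) x * ennreal (cmod (h x))^2)"
      using outside
    proof eventually_elim
      case (elim x)
      then show ?case
        by (simp only: ennreal_suminf_multc suminf_indicator_J) (auto simp: indicator_def)
    qed
  qed
  also have "\<dots> = (\<Sum>n. \<integral>\<^sup>+x. indicator (J n) x * ennreal (cmod (h x))^2 \<partial>LI)"
    by (rule nn_integral_suminf) measurable
  finally show ?thesis
    by (simp add: sqnorm_indicator)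
qed

lemma suminf_piece_norm_le:
  assumes f: "L2 a b f"
  shows "(\<Sum>m. ennreal ((piece_norm f m)^2)) \<le> sqnorm f"
proof -
  have [measurable]: "f \<in> borel_measurable LI"
    using f by (rule L2_measurable)
  have "(\<Sum>m. ennreal ((piece_norm f m)^2)) = (\<Sum>m. \<integral>\<^sup>+x. indicator (J m) x * ennreal (cmod (f x))^2 \<partial>LI)"
    by (simp add: piece_norm_def L2_indicator_mult[OF _ f] flip: sqnorm_eq_L2norm sqnorm_indicator)
  also have "\<dots> = (\<integral>\<^sup>+x. (\<Sum>m. indicator (J m) x * ennreal (cmod (f x))^2) \<partial>LI)"
    by (rule nn_integral_suminf[symmetric]) measurable
  also have "\<dots> \<le> sqnorm f"
    unfolding sqnorm_def
    by (intro nn_integral_mono) (simp only: ennreal_suminf_multc suminf_indicator_J, simp add: indicator_def)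
  finally show ?thesis .
qed

lemma tail_integrand_le_suminf_pieces:
  assumes n: "0 < n" and t: "t \<in> J n"
  shows "AE s in LI. ennreal (norm (indicator {t<..} s *\<^sub>R (f s * cnj (\<kappa> s))))
    \<le> (\<Sum>m. (if n \<le> m then indicator (J m) s else 0) * (ennreal (cmod (f s)) * ennreal (cmod (\<kappa> s))))"
  using \<kappa>_vanishes_outside_pieces
proof eventually_elim
  case (elim s)
  show ?case
  proof (cases "t < s \<and> \<kappa> s \<noteq> 0")
    case True
    with elim obtain m where m: "s \<in> J m"
      by blast
    have "n \<le> m"
    proof (rule ccontr)
      assume "\<not> n \<le> m"
      then have "c m \<le> c (n - 1)"
        by (simp add: strict_mono_less_eq[OF c_strict_mono])
      moreover have "ereal s < c m" "c (n - 1) < ereal t"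
        using m t by (simp_all add: mem_J)
      ultimately have "ereal s < ereal t"
        by (meson order.strict_trans order.strict_trans1)
      with True show False
        by simp
    qed
    have "ennreal (norm (indicator {t<..} s *\<^sub>R (f s * cnj (\<kappa> s)))) =
        (if n \<le> m then indicator (J m) s else 0) * (ennreal (cmod (f s)) * ennreal (cmod (\<kappa> s)))"
      using True m \<open>n \<le> m\<close> by (simp add: norm_mult ennreal_mult)
    also have "\<dots> \<le> (\<Sum>m. (if n \<le> m then indicator (J m) s else 0) * (ennreal (cmod (f s)) * ennreal (cmod (\<kappa> s))))"
      using sum_le_suminf[OF summableI, of "{m}"
          "\<lambda>k. (if n \<le> k then indicator (J k) s else 0) * (ennreal (cmod (f s)) * ennreal (cmod (\<kappa> s)))"]
      by simp
    finally show ?thesis .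
  qed (auto simp: indicator_def)
qed

lemma norm_tail_integral_le_suminf_pieces:
  assumes f: "L2 a b f" and n: "0 < n" and t: "t \<in> J n"
  shows "ennreal (cmod (tail_integral f t))
    \<le> (\<Sum>m. ennreal (if n \<le> m then piece_norm f m * piece_norm \<kappa> m else 0))"
proof -
  have [measurable]: "f \<in> borel_measurable LI"
    using f by (rule L2_measurable)
  have "ennreal (cmod (tail_integral f t))
      \<le> (\<integral>\<^sup>+s. ennreal (norm (indicator {t<..} s *\<^sub>R (f s * cnj (\<kappa> s)))) \<partial>LI)"
    unfolding tail_integral_def by (rule integral_norm_bound_ennreal[OF integrable_tail_integrand[OF f]])
  also have "\<dots> \<le> (\<integral>\<^sup>+s. (\<Sum>m. (if n \<le> m then indicator (J m) s else 0) *
      (ennreal (cmod (f s)) * ennreal (cmod (\<kappa> s)))) \<partial>LI)"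
    by (rule nn_integral_mono_AE[OF tail_integrand_le_suminf_pieces[OF n t]])
  also have "\<dots> = (\<Sum>m. \<integral>\<^sup>+s. (if n \<le> m then indicator (J m) s else 0) *
      (ennreal (cmod (f s)) * ennreal (cmod (\<kappa> s))) \<partial>LI)"
    by (rule nn_integral_suminf) measurable
  also have "\<dots> \<le> (\<Sum>m. ennreal (if n \<le> m then piece_norm f m * piece_norm \<kappa> m else 0))"
  proof (intro suminf_le summableI)
    fix m
    show "(\<integral>\<^sup>+s. (if n \<le> m then indicator (J m) s else 0) * (ennreal (cmod (f s)) * ennreal (cmod (\<kappa> s))) \<partial>LI)
        \<le> ennreal (if n \<le> m then piece_norm f m * piece_norm \<kappa> m else 0)"
    proof (cases "n \<le> m")
      case True
      have "(\<integral>\<^sup>+s. (if n \<le> m then indicator (J m) s else 0) * (ennreal (cmod (f s)) * ennreal (cmod (\<kappa> s))) \<partial>LI)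
          = (\<integral>\<^sup>+s. ennreal (cmod (of_real (indicator (J m) s) * f s)) *
              ennreal (cmod (of_real (indicator (J m) s) * \<kappa> s)) \<partial>LI)"
        using True by (intro nn_integral_cong) (simp add: indicator_def)
      also have "\<dots> \<le> ennreal (piece_norm f m * piece_norm \<kappa> m)"
        unfolding piece_norm_def by (intro nn_integral_norm_mult_le_L2norm L2_indicator_mult f \<kappa>_L2 sets_J)
      finally show ?thesis
        using True by simp
    qed simp
  qed
  finally show ?thesis .
qed

lemma norm_tail_integral_le_geometric_convolution:
  assumes f: "L2 a b f" and n: "0 < n" and t: "t \<in> J n"
  shows "ennreal (cmod (tail_integral f t)) \<le> ennreal (piece_norm \<kappa> n) *
    (\<Sum>m. ennreal (if n \<le> m then piece_norm f m * sqrt (1/2) ^ (m - n) else 0))"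
proof -
  let ?k = "piece_norm \<kappa> n"
  have "ennreal (cmod (tail_integral f t))
      \<le> (\<Sum>m. ennreal (if n \<le> m then piece_norm f m * piece_norm \<kappa> m else 0))"
    by (rule norm_tail_integral_le_suminf_pieces[OF f n t])
  also have "\<dots> = (\<Sum>m. ennreal ?k * ennreal (if n \<le> m then piece_norm f m * sqrt (1/2) ^ (m - n) else 0))"
  proof (intro suminf_cong)
    fix m
    show "ennreal (if n \<le> m then piece_norm f m * piece_norm \<kappa> m else 0) =
        ennreal ?k * ennreal (if n \<le> m then piece_norm f m * sqrt (1/2) ^ (m - n) else 0)"
    proof (cases "n \<le> m")
      case True
      have eq: "piece_norm f m * piece_norm \<kappa> m = ?k * (piece_norm f m * sqrt (1/2) ^ (m - n))"
        unfolding piece_norm_\<kappa>_shift[OF n True] by (simp add: mult_ac)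
      show ?thesis
        by (simp only: True if_True eq) (rule ennreal_mult; simp add: piece_norm_nonneg)
    qed simp
  qed
  also have "\<dots> = ennreal ?k * (\<Sum>m. ennreal (if n \<le> m then piece_norm f m * sqrt (1/2) ^ (m - n) else 0))"
    by (rule ennreal_suminf_cmult)
  finally show ?thesis .
qed

lemma sqnorm_piece_intop_le:
  assumes f: "L2 a b f" and M: "piece_norm \<kappa> n * piece_norm \<phi> n \<le> M"
  shows "sqnorm (\<lambda>x. of_real (indicator (J n) x) * T f x) \<le>
    ennreal (M^2) * (\<Sum>m. ennreal (if n \<le> m then piece_norm f m * sqrt (1/2) ^ (m - n) else 0))^2"
proof (cases "n = 0")
  case True
  then show ?thesis
    by (simp add: J_empty sqnorm_def)
next
  case False
  then have n: "0 < n"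
    by simp
  let ?S = "\<Sum>m. ennreal (if n \<le> m then piece_norm f m * sqrt (1/2) ^ (m - n) else 0)"
  let ?k = "piece_norm \<kappa> n"
  note tail = norm_tail_integral_le_geometric_convolution[OF f n]
  have "sqnorm (\<lambda>x. of_real (indicator (J n) x) * T f x)
      = (\<integral>\<^sup>+t. indicator (J n) t * ennreal (cmod (T f t))^2 \<partial>LI)"
    by (rule sqnorm_indicator)
  also have "\<dots> \<le> (\<integral>\<^sup>+t. indicator (J n) t * ennreal (cmod (\<phi> t))^2 * (ennreal ?k * ?S)^2 \<partial>LI)"
  proof (intro nn_integral_mono)
    fix t assume "t \<in> space LI"
    then have "ennreal (cmod (T f t))^2 = ennreal (cmod (\<phi> t))^2 * ennreal (cmod (tail_integral f t))^2"
      by (simp add: intop_eq_tail_integral norm_mult ennreal_mult power_mult_distrib)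
    also have "\<dots> \<le> ennreal (cmod (\<phi> t))^2 * (ennreal ?k * ?S)^2" if "t \<in> J n"
      using tail[OF that] by (intro mult_left_mono power_mono) simp_all
    finally show "indicator (J n) t * ennreal (cmod (T f t))^2
        \<le> indicator (J n) t * ennreal (cmod (\<phi> t))^2 * (ennreal ?k * ?S)^2"
      by (simp add: indicator_def mult.assoc)
  qed
  also have "\<dots> = ennreal ((piece_norm \<phi> n)^2) * (ennreal ?k * ?S)^2"
    using L2_piece_\<phi>[OF n]
    by (simp add: nn_integral_multc piece_norm_def flip: sqnorm_indicator sqnorm_eq_L2norm)
  also have "\<dots> = ennreal ((?k * piece_norm \<phi> n)^2) * ?S^2"
  proof -
    have "ennreal ((?k * piece_norm \<phi> n)^2) = ennreal ((piece_norm \<phi> n)^2) * ennreal ?k ^ 2"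
      by (simp add: ennreal_power ennreal_mult power_mult_distrib piece_norm_nonneg mult.commute)
    then show ?thesis
      by (simp add: power_mult_distrib mult.assoc)
  qed
  also have "\<dots> \<le> ennreal (M^2) * ?S^2"
    using M by (intro mult_right_mono ennreal_leI power_mono) (simp_all add: piece_norm_nonneg)
  finally show ?thesis .
qed

lemma op_bounded_if_omega_bounded:
  assumes "\<exists>M. \<forall>n\<ge>1. piece_norm \<kappa> n * piece_norm \<phi> n \<le> M"
  shows "op_bounded a b D T"
proof -
  obtain M where M_pos: "\<And>n. 1 \<le> n \<Longrightarrow> piece_norm \<kappa> n * piece_norm \<phi> n \<le> M"
    using assms by blast
  have M0: "0 \<le> M"
    using M_pos[of 1] mult_nonneg_nonneg[OF piece_norm_nonneg piece_norm_nonneg, of \<kappa> 1 \<phi> 1] by linarith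
  have M: "piece_norm \<kappa> n * piece_norm \<phi> n \<le> M" for n
    using M_pos[of n] M0 by (cases n) (simp_all add: piece_norm_def J_empty L2norm_def)
  define \<rho> where "\<rho> = sqrt (1/2::real)"
  have \<rho>: "0 \<le> \<rho>" "\<rho> < 1"
    by (simp_all add: \<rho>_def)
  define C where "C = M / (1 - \<rho>)"
  have C: "0 \<le> C"
    using M0 \<rho> by (simp add: C_def)
  have "L2norm a b (T f) \<le> C * L2norm a b f" if fD: "f \<in> D" for f
  proof -
    have f: "L2 a b f" and Tf: "L2 a b (T f)"
      using fD by (simp_all add: intop_dom_def)
    have [measurable]: "T f \<in> borel_measurable LI"
      using Tf by (rule L2_measurable)
    let ?S = "\<lambda>n. \<Sum>m. ennreal (if n \<le> m then piece_norm f m * \<rho> ^ (m - n) else 0)"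
    have "sqnorm (T f) = (\<Sum>n. sqnorm (\<lambda>x. of_real (indicator (J n) x) * T f x))"
      by (rule sqnorm_eq_suminf_pieces[OF _ intop_vanishes_outside_pieces[OF f]]) measurable
    also have "\<dots> \<le> (\<Sum>n. ennreal (M^2) * (?S n)^2)"
      unfolding \<rho>_def by (intro suminf_le summableI sqnorm_piece_intop_le f M)
    also have "\<dots> = ennreal (M^2) * (\<Sum>n. (?S n)^2)"
      by (rule ennreal_suminf_cmult)
    also have "\<dots> \<le> ennreal (M^2) * (ennreal (1 / (1 - \<rho>)^2) * (\<Sum>m. ennreal ((piece_norm f m)^2)))"
      by (intro mult_left_mono suminf_square_geometric_convolution_le piece_norm_nonneg \<rho>) simp
    also have "\<dots> \<le> ennreal (M^2) * (ennreal (1 / (1 - \<rho>)^2) * sqnorm f)"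
      by (intro mult_left_mono suminf_piece_norm_le f) simp_all
    also have "\<dots> = ennreal ((C * L2norm a b f)^2)"
      using \<rho> by (simp add: sqnorm_eq_L2norm[OF f] C_def power_mult_distrib power_divide mult_ac
          flip: ennreal_mult')
    finally show ?thesis
      using C by (intro sqnorm_le_imp_L2norm_le(2)) (simp_all add: L2norm_nonneg)
  qed
  then show ?thesis
    unfolding op_bounded_def by blast
qed

end

theorem theorem5p2:
  fixes a b :: ereal and \<kappa> \<phi> :: "real \<Rightarrow> complex" and c :: "nat \<Rightarrow> ereal"
  assumes ab: "a < b"
    and \<kappa>_L2: "L2 a b \<kappa>"
    and \<phi>_meas: "\<phi> \<in> borel_measurable (lebesgue_on (Ioo_e a b))"
    and \<phi>_loc: "\<And>r. a < ereal r \<Longrightarrow> ereal r < b \<Longrightarrow>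
                 L2 a b (\<lambda>x. of_real (indicator (Ioo_e a (ereal r)) x) * \<phi> x)"
    and c0: "c 0 = a"
    and c_mono: "\<And>n. c n < c (Suc n)"
    and c_lt: "\<And>n. c n < b"
    and c_norm: "\<And>n. (L2norm a b (\<lambda>x. of_real (indicator (Ioo_e (c n) b) x) * \<kappa> x))\<^sup>2
                       = (1/2) ^ n * (L2norm a b \<kappa>)\<^sup>2"
  defines "\<omega> \<equiv> (\<lambda>n. L2norm a b (\<lambda>x. of_real (indicator (Ioo_e (c (n - 1)) (c n)) x) * \<kappa> x)
                     * L2norm a b (\<lambda>x. of_real (indicator (Ioo_e (c (n - 1)) (c n)) x) * \<phi> x))"
  shows "(op_bounded a b (intop_dom a b \<phi> \<kappa>) (intop b \<phi> \<kappa>)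
            \<longrightarrow> re_op_bounded a b (intop_dom a b \<phi> \<kappa>) (intop b \<phi> \<kappa>))
       \<and> (re_op_bounded a b (intop_dom a b \<phi> \<kappa>) (intop b \<phi> \<kappa>)
            \<longrightarrow> (\<exists>M. \<forall>n\<ge>1. \<omega> n \<le> M))
       \<and> ((\<exists>M. \<forall>n\<ge>1. \<omega> n \<le> M)
            \<longrightarrow> op_bounded a b (intop_dom a b \<phi> \<kappa>) (intop b \<phi> \<kappa>))"
proof -
  interpret dyadic_partition a b \<kappa> \<phi> c
    by unfold_locales (use assms in auto)
  have "\<omega> = (\<lambda>n. piece_norm \<kappa> n * piece_norm \<phi> n)"
    by (simp add: \<omega>_def piece_norm_def J_def)
  then show ?thesis
    using re_op_bounded_if_op_bounded omega_bounded_if_re_op_bounded op_bounded_if_omega_bounded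
    by blast
qed

end
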